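(* Let $X_\Sigma$ be a projective toric variety and $D$ an $\mathbf R$-ample divisor on $X_\Sigma$. For each primitive collection $C$ let $\lambda_C\in\Lambda^D$ be the unique element with $\overline{S^{\chi_D}_{\lambda_C}}=V(x_\rho:\rho\in C)$. Then $$\{\mathbf 0\}=\bigcap_{\lambda\in\Lambda^D}\overline{S^{\chi_D}_\lambda}=\bigcap_{C\text{ primitive collection}}\overline{S^{\chi_D}_{\lambda_C}},$$ where $\mathbf 0$ is the origin of $\mathbf C^{\Sigma(1)}$.
   Context: $\Sigma$ complete fan with rays $\Sigma(1)$, generators $u_\rho$, divisors $D_\rho$; a primitive collection is $C\subset\Sigma(1)$ not contained in $\sigma(1)$ for any cone $\sigma$ while every proper subset is; $\mathbf C^{\Sigma(1)}=\mathrm{Spec}\,\mathbf C[x_\rho]$, $Z(\Sigma)=\bigcup_CV(x_\rho:\rho\in C)$. $\Gamma(G)=\{b\in\mathbf Z^{\Sigma(1)}:\sum b_\rho u_\rho=0\}$, $\langle\chi_D,b\rangle=\sum a_\rho b_\rho$ for $D=\sum a_\rho D_\rho$ (extended $\mathbf R$-linearly), $\Gamma(G)_{\mathbf R}\subset\mathbf R^{\Sigma(1)}$ with restricted standard norm. $\mathbf R$-ample divisors are elements of the ample cone in $\mathrm{Pic}(X_\Sigma)_{\mathbf R}$. For $x\in Z(\Sigma)$, $\sigma_x=\{v\in\Gamma(G)_{\mathbf R}:v_\rho\ge0\text{ whenever }x_\rho\ne0\}$; $v\mapsto\langle\chi_D,v\rangle/\|v\|$ attains its negative minimum $M^D(x)$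 on $\sigma_x\setminus\{0\}$ exactly on one ray, and $\lambda^D_x$ is the vector on it with $\|\lambda^D_x\|=-M^D(x)$. $\Lambda^D=\{\lambda^D_x:x\in Z(\Sigma)\}$, $S^{\chi_D}_\lambda=\{x\in Z(\Sigma):\lambda^D_x=\lambda\}$; for each primitive collection $C$ such a $\lambda_C$ exists and is unique. *)

theory Defs
  imports "HOL-Analysis.Analysis"
begin

text \<open>The rays \<Sigma>(1) are indexed by a finite type 'r (so \<Sigma>(1) = UNIV).
  The lattice N is the integer points of real^'n; u \<rho> is the primitive generator of \<rho>.
  A cone of the fan is recorded by its set of rays \<sigma>(1) \<subseteq> \<Sigma>(1); the cone itself is
  the convex cone spanned by the generators.\<close>

definition tcone :: "('r \<Rightarrow> real^'n) \<Rightarrow> 'r set \<Rightarrow> (real^'n) set" where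
  "tcone u S = convex_cone hull (u ` S)"

definition lattice_point :: "real^'n \<Rightarrow> bool" where
  "lattice_point v \<longleftrightarrow> (\<forall>i. v $ i \<in> \<int>)"

definition primitive_lattice_vector :: "real^'n \<Rightarrow> bool" where
  "primitive_lattice_vector v \<longleftrightarrow> lattice_point v \<and> v \<noteq> 0 \<and>
     (\<forall>t::real. 0 < t \<and> t < 1 \<longrightarrow> \<not> lattice_point (t *\<^sub>R v))"

definition complete_fan :: "('r::finite \<Rightarrow> real^'n) \<Rightarrow> 'r set set \<Rightarrow> bool" where
  "complete_fan u \<Sigma> \<longleftrightarrow>
     (\<forall>\<rho>. primitive_lattice_vector (u \<rho>)) \<and>
     (\<forall>\<rho>. {\<rho>} \<in> \<Sigma>) \<and>
     (\<forall>S\<in>\<Sigma>. tcone u S \<inter> uminus ` tcone u S = {0}) \<and>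
     (\<forall>S\<in>\<Sigma>. \<forall>\<rho>. u \<rho> \<in> tcone u S \<longrightarrow> \<rho> \<in> S) \<and>
     (\<forall>S\<in>\<Sigma>. \<forall>F. F face_of tcone u S \<longrightarrow> {\<rho>. u \<rho> \<in> F} \<in> \<Sigma>) \<and>
     (\<forall>S\<in>\<Sigma>. \<forall>T\<in>\<Sigma>. (tcone u S \<inter> tcone u T) face_of tcone u S) \<and>
     (\<Union>S\<in>\<Sigma>. tcone u S) = UNIV"

definition primitive_collection :: "'r set set \<Rightarrow> 'r set \<Rightarrow> bool" where
  "primitive_collection \<Sigma> C \<longleftrightarrow>
     (\<forall>S\<in>\<Sigma>. \<not> C \<subseteq> S) \<and> (\<forall>C'. C' \<subset> C \<longrightarrow> (\<exists>S\<in>\<Sigma>. C' \<subseteq> S))"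

definition max_cone :: "'r set set \<Rightarrow> 'r set \<Rightarrow> bool" where
  "max_cone \<Sigma> S \<longleftrightarrow> S \<in> \<Sigma> \<and> \<not> (\<exists>T\<in>\<Sigma>. S \<subset> T)"

text \<open>The torus-invariant \<real>-divisor D = \<Sum> a \<rho> D_\<rho> has class in the ample cone of
  Pic(X)_\<real>: it is \<real>-Cartier with strictly convex support function, i.e. on every
  maximal cone \<sigma> there is m_\<sigma> with \<langle>m_\<sigma>,u_\<rho>\<rangle> = -a_\<rho> for \<rho> \<in> \<sigma>(1) and > -a_\<rho> otherwise.\<close>
definition R_ample :: "('r \<Rightarrow> real^'n) \<Rightarrow> 'r set set \<Rightarrow> ('r \<Rightarrow> real) \<Rightarrow> bool" where
  "R_ample u \<Sigma> a \<longleftrightarrow> (\<forall>S. max_cone \<Sigma> S \<longrightarrow>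
     (\<exists>m::real^'n. (\<forall>\<rho>\<in>S. m \<bullet> u \<rho> = - a \<rho>) \<and> (\<forall>\<rho>. \<rho> \<notin> S \<longrightarrow> m \<bullet> u \<rho> > - a \<rho>)))"

text \<open>X_\<Sigma> projective: it carries an ample (integral, torus-invariant) divisor.\<close>
definition projective_fan :: "('r \<Rightarrow> real^'n) \<Rightarrow> 'r set set \<Rightarrow> bool" where
  "projective_fan u \<Sigma> \<longleftrightarrow> (\<exists>a. (\<forall>\<rho>. a \<rho> \<in> \<int>) \<and> R_ample u \<Sigma> a)"

definition Vcoord :: "'r::finite set \<Rightarrow> (complex^'r) set" where
  "Vcoord C = {x. \<forall>\<rho>\<in>C. x $ \<rho> = 0}"

definition Zset :: "'r::finite set set \<Rightarrow> (complex^'r) set" where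
  "Zset \<Sigma> = (\<Union>C\<in>{C. primitive_collection \<Sigma> C}. Vcoord C)"

definition GammaR :: "('r::finite \<Rightarrow> real^'n) \<Rightarrow> (real^'r) set" where
  "GammaR u = {b. (\<Sum>\<rho>\<in>UNIV. b $ \<rho> *\<^sub>R u \<rho>) = 0}"

definition chi_pair :: "('r::finite \<Rightarrow> real) \<Rightarrow> real^'r \<Rightarrow> real" where
  "chi_pair a b = (\<Sum>\<rho>\<in>UNIV. a \<rho> * b $ \<rho>)"

definition sigma_x :: "('r::finite \<Rightarrow> real^'n) \<Rightarrow> complex^'r \<Rightarrow> (real^'r) set" where
  "sigma_x u x = {v \<in> GammaR u. \<forall>\<rho>. x $ \<rho> \<noteq> 0 \<longrightarrow> v $ \<rho> \<ge> 0}"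

text \<open>\<lambda>^D_x: the vector on the unique minimizing ray of v \<mapsto> \<langle>\<chi>_D,v\<rangle>/\<parallel>v\<parallel> on \<sigma>_x - {0},
  with norm -M^D(x).\<close>
definition lambda_x :: "('r::finite \<Rightarrow> real^'n) \<Rightarrow> ('r \<Rightarrow> real) \<Rightarrow> complex^'r \<Rightarrow> real^'r" where
  "lambda_x u a x = (THE v. v \<in> sigma_x u x \<and> v \<noteq> 0 \<and>
      (\<forall>w\<in>sigma_x u x - {0}. chi_pair a v / norm v \<le> chi_pair a w / norm w) \<and>
      norm v = - (chi_pair a v / norm v))"

definition LambdaD :: "('r::finite \<Rightarrow> real^'n) \<Rightarrow> 'r set set \<Rightarrow> ('r \<Rightarrow> real) \<Rightarrow> (real^'r) set" where
  "LambdaD u \<Sigma> a = lambda_x u a ` Zset \<Sigma>"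

definition stratum :: "('r::finite \<Rightarrow> real^'n) \<Rightarrow> 'r set set \<Rightarrow> ('r \<Rightarrow> real) \<Rightarrow> real^'r \<Rightarrow> (complex^'r) set" where
  "stratum u \<Sigma> a l = {x \<in> Zset \<Sigma>. lambda_x u a x = l}"

definition lambda_C :: "('r::finite \<Rightarrow> real^'n) \<Rightarrow> 'r set set \<Rightarrow> ('r \<Rightarrow> real) \<Rightarrow> 'r set \<Rightarrow> real^'r" where
  "lambda_C u \<Sigma> a C = (THE l. l \<in> LambdaD u \<Sigma> a \<and> closure (stratum u \<Sigma> a l) = Vcoord C)"

end

theory Submission
  imports Defs
begin

text \<open>For \<open>x \<in> Z(\<Sigma>)\<close> the vector \<open>\<lambda>_x\<close> depends only on the coordinates where \<open>x\<close> vanishes.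
  If \<open>x \<in> V(x_\<rho> : \<rho> \<in> C)\<close> for a primitive collection \<open>C\<close>, the primitive relation of \<open>C\<close> gives a
  vector of \<open>\<sigma>_x\<close> on which \<open>\<chi>_D\<close> is negative, so \<open>\<lambda>_x\<close> exists, and it is unique because the
  Euclidean norm is strictly convex. At the generic point of \<open>V(C)\<close>, minimality of \<open>C\<close> and strict
  convexity of the support function of \<open>D\<close> force \<open>\<lambda>_\<rho> < 0\<close> for all \<open>\<rho> \<in> C\<close>. Hence that stratum
  lies in \<open>V(C)\<close> and contains all points vanishing exactly on \<open>C\<close>, so its closure is \<open>V(C)\<close>, which
  identifies \<open>\<lambda>_C\<close>. Strata are stable under positive scaling, so \<open>0\<close> lies in every closure; and by
  completeness every ray lies in a primitive collection, so the \<open>V(C)\<close> meet only in \<open>0\<close>.\<close>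

section \<open>Optimal vectors of a linear functional on a closed convex cone\<close>

definition optimal_vector :: "('a::real_normed_vector \<Rightarrow> real) \<Rightarrow> 'a set \<Rightarrow> 'a \<Rightarrow> bool" where
  "optimal_vector f K v \<longleftrightarrow> v \<in> K \<and> v \<noteq> 0 \<and>
     (\<forall>w\<in>K - {0}. f v / norm v \<le> f w / norm w) \<and> norm v = - (f v / norm v)"

lemma optimal_vector_neg:
  assumes "optimal_vector f K v"
  shows "f v < 0"
proof -
  have "0 < norm v" "norm v = - (f v / norm v)"
    using assms by (auto simp: optimal_vector_def)
  then have "f v / norm v < 0"
    by linarith
  with \<open>0 < norm v\<close> show ?thesis
    by (simp add: divide_less_0_iff)
qed

text \<open>Two optimal vectors have the same norm \<open>-M\<close>; since \<open>v1 + v2\<close> is not better than \<open>v1\<close>, the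
  triangle inequality for them is an equality, which in an inner product space forces \<open>v1 = v2\<close>.\<close>
lemma optimal_vector_unique:
  fixes f :: "'a::real_inner \<Rightarrow> real"
  assumes "linear f" "convex_cone K" "optimal_vector f K v1" "optimal_vector f K v2"
  shows "v1 = v2"
proof -
  define M where "M = f v1 / norm v1"
  have pos: "0 < norm v1" "0 < norm v2"
    using assms(3,4) by (auto simp: optimal_vector_def)
  have "f v2 / norm v2 = M"
    using assms(3,4) unfolding M_def optimal_vector_def by (meson Diff_iff antisym singletonD)
  then have norms: "norm v1 = - M" "norm v2 = - M"
    using assms(3,4) unfolding M_def optimal_vector_def by auto
  have fv: "f v1 = M * norm v1" "f v2 = M * norm v2"
    using \<open>f v2 / norm v2 = M\<close> pos unfolding M_def by (auto simp: field_simps)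
  have "M < 0"
    using norms pos by linarith
  have f_sum: "f (v1 + v2) = -2 * M * M"
    using fv norms by (simp add: linear_add[OF assms(1)])
  then have "v1 + v2 \<noteq> 0"
    using \<open>M < 0\<close> linear_0[OF assms(1)] by force
  moreover have "v1 + v2 \<in> K"
    using assms(2-4) convex_cone_add unfolding optimal_vector_def by blast
  ultimately have "M \<le> f (v1 + v2) / norm (v1 + v2)"
    using assms(3) unfolding M_def optimal_vector_def by blast
  then have "(- M) * (- 2 * M) \<le> (- M) * norm (v1 + v2)"
    using \<open>v1 + v2 \<noteq> 0\<close> f_sum by (simp add: field_simps)
  then have "- 2 * M \<le> norm (v1 + v2)"
    using \<open>M < 0\<close> by (metis mult_le_cancel_left_pos neg_0_less_iff_less)
  then have "norm (v1 + v2) \<ge> norm v1 + norm v2"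
    using norms by simp
  then have "norm (v1 + v2) = norm v1 + norm v2"
    by (rule antisym[OF norm_triangle_ineq])
  then have "norm v1 *\<^sub>R v2 = norm v2 *\<^sub>R v1"
    by (simp add: norm_triangle_eq)
  then show ?thesis
    using norms \<open>M < 0\<close> by simp
qed

lemma optimal_vector_exists:
  fixes f :: "'a::euclidean_space \<Rightarrow> real"
  assumes "linear f" "closed K" "convex_cone K" "w \<in> K" "f w < 0"
  shows "\<exists>v. optimal_vector f K v"
proof -
  let ?S = "K \<inter> sphere 0 1"
  have normalize: "(1 / norm y) *\<^sub>R y \<in> ?S" if "y \<in> K - {0}" for y
    using that convex_cone_scaleR[OF assms(3)] by auto
  have "w \<noteq> 0"
    using assms(1,5) linear_0 by force
  then have "?S \<noteq> {}"
    using normalize assms(4) by blast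
  moreover have "compact ?S"
    using assms(2) by (simp add: closed_Int_compact)
  moreover have "continuous_on ?S f"
    using assms(1) by (simp add: linear_continuous_on linear_conv_bounded_linear)
  ultimately obtain e where e: "e \<in> ?S" "\<And>y. y \<in> ?S \<Longrightarrow> f e \<le> f y"
    by (meson continuous_attains_inf)
  have ratio: "f e \<le> f y / norm y" if "y \<in> K - {0}" for y
    using e(2)[OF normalize[OF that]] linear_cmul[OF assms(1)] by simp
  have "f e < 0"
    using ratio[of w] assms(4,5) \<open>w \<noteq> 0\<close> divide_neg_pos[of "f w" "norm w"] by fastforce
  define v where "v = (- f e) *\<^sub>R e"
  have norm_v: "norm v = - f e"
    using e(1) \<open>f e < 0\<close> by (simp add: v_def)
  moreover have "f v = (- f e) * f e"
    using linear_cmul[OF assms(1), of "- f e" e] by (simp add: v_def)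
  ultimately have ratio_v: "f v / norm v = f e"
    using \<open>f e < 0\<close> by simp
  have "v \<in> K"
    using e(1) \<open>f e < 0\<close> convex_cone_scaleR[OF assms(3), of "- f e" e] unfolding v_def by simp
  then show ?thesis
    unfolding optimal_vector_def using ratio ratio_v norm_v \<open>f e < 0\<close> by force
qed

lemma ex1_optimal_vector:
  fixes f :: "'a::euclidean_space \<Rightarrow> real"
  assumes "linear f" "closed K" "convex_cone K" "w \<in> K" "f w < 0"
  shows "\<exists>!v. optimal_vector f K v"
  using optimal_vector_exists[OF assms] optimal_vector_unique[OF assms(1,3)] by blast

lemma chi_pair_eq_inner: "chi_pair a b = (\<chi> \<rho>. a \<rho>) \<bullet> b"
  by (simp add: chi_pair_def inner_vec_def)

lemma linear_chi_pair: "linear (chi_pair a)"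
  unfolding chi_pair_eq_inner[abs_def]
  by (simp add: bounded_linear.linear bounded_linear_inner_right)

lemma closed_sigma_x: "closed (sigma_x u x)"
proof -
  have "sigma_x u x = GammaR u \<inter> (\<Inter>\<tau>\<in>{\<tau>. x $ \<tau> \<noteq> 0}. {v. 0 \<le> v $ \<tau>})"
    unfolding sigma_x_def by auto
  moreover have "closed (GammaR u)"
    unfolding GammaR_def by (intro closed_Collect_eq continuous_intros)
  moreover have "closed {v::real^'r. 0 \<le> v $ \<tau>}" for \<tau>
    by (intro closed_Collect_le continuous_intros)
  ultimately show ?thesis
    by (simp only:) (intro closed_Int closed_INT ballI)
qed

lemma convex_cone_sigma_x: "convex_cone (sigma_x u x)"
proof -
  have "(\<Sum>\<rho>\<in>UNIV. (c * v $ \<rho>) *\<^sub>R u \<rho>) = c *\<^sub>R (\<Sum>\<rho>\<in>UNIV. v $ \<rho> *\<^sub>R u \<rho>)" for c v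
    by (simp add: scaleR_sum_right)
  then show ?thesis
    unfolding convex_cone_iff sigma_x_def GammaR_def by (auto simp: scaleR_add_left sum.distrib)
qed

section \<open>Cones and primitive collections of a complete fan\<close>

lemma tcone_mono: "S \<subseteq> T \<Longrightarrow> tcone u S \<subseteq> tcone u T"
  unfolding tcone_def by (intro hull_mono image_mono)

lemma tcone_imp_nonneg_combination:
  fixes u :: "'r::finite \<Rightarrow> real^'n"
  assumes "y \<in> tcone u S"
  shows "\<exists>c. (\<forall>\<tau>. 0 \<le> c \<tau>) \<and> (\<forall>\<tau>. \<tau> \<notin> S \<longrightarrow> c \<tau> = 0) \<and> y = (\<Sum>\<tau>\<in>UNIV. c \<tau> *\<^sub>R u \<tau>)"
proof -
  define T where "T = {(\<Sum>\<tau>\<in>UNIV. c \<tau> *\<^sub>R u \<tau>) | c. (\<forall>\<tau>. 0 \<le> c \<tau>) \<and> (\<forall>\<tau>. \<tau> \<notin> S \<longrightarrow> c \<tau> = 0)}"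
  have "convex_cone T"
    unfolding convex_cone_iff
  proof (intro conjI ballI allI impI)
    show "0 \<in> T"
      unfolding T_def by (rule CollectI, rule exI[of _ "\<lambda>_. 0"]) simp
  next
    fix x y assume "x \<in> T" "y \<in> T"
    then obtain c d where "x = (\<Sum>\<tau>\<in>UNIV. c \<tau> *\<^sub>R u \<tau>)" "y = (\<Sum>\<tau>\<in>UNIV. d \<tau> *\<^sub>R u \<tau>)"
      "\<forall>\<tau>. 0 \<le> c \<tau>" "\<forall>\<tau>. \<tau> \<notin> S \<longrightarrow> c \<tau> = 0" "\<forall>\<tau>. 0 \<le> d \<tau>" "\<forall>\<tau>. \<tau> \<notin> S \<longrightarrow> d \<tau> = 0"
      unfolding T_def by blast
    then show "x + y \<in> T"
      unfolding T_def by (intro CollectI exI[of _ "\<lambda>\<tau>. c \<tau> + d \<tau>"]) (auto simp: scaleR_add_left sum.distrib)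
  next
    fix x and k :: real assume "x \<in> T" "0 \<le> k"
    then obtain c where "x = (\<Sum>\<tau>\<in>UNIV. c \<tau> *\<^sub>R u \<tau>)" "\<forall>\<tau>. 0 \<le> c \<tau>" "\<forall>\<tau>. \<tau> \<notin> S \<longrightarrow> c \<tau> = 0"
      unfolding T_def by blast
    then show "k *\<^sub>R x \<in> T"
      unfolding T_def using \<open>0 \<le> k\<close> by (intro CollectI exI[of _ "\<lambda>\<tau>. k * c \<tau>"]) (auto simp: scaleR_sum_right)
  qed
  moreover have "u \<rho> \<in> T" if "\<rho> \<in> S" for \<rho>
    unfolding T_def using that
    by (intro CollectI exI[of _ "\<lambda>\<tau>. if \<tau> = \<rho> then 1 else 0"]) (auto simp: if_distrib[of "\<lambda>c. c *\<^sub>R _"] cong: if_cong)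
  ultimately have "tcone u S \<subseteq> T"
    unfolding tcone_def by (intro hull_minimal) auto
  then show ?thesis
    using assms unfolding T_def by blast
qed

lemma ex_max_cone_superset:
  fixes \<Sigma> :: "'r::finite set set"
  assumes "S \<in> \<Sigma>"
  shows "\<exists>S'. max_cone \<Sigma> S' \<and> S \<subseteq> S'"
proof -
  obtain S' where "S' \<in> \<Sigma>" "S \<subseteq> S'" and maximal: "\<forall>T\<in>\<Sigma>. S' \<subseteq> T \<longrightarrow> S' = T"
    using finite_has_maximal2[OF finite assms] by blast
  then have "max_cone \<Sigma> S'"
    unfolding max_cone_def by (auto simp: psubset_eq)
  then show ?thesis
    using \<open>S \<subseteq> S'\<close> by blast
qed

lemma ex_primitive_collection_subset:
  fixes \<Sigma> :: "'r::finite set set"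
  assumes "\<forall>S\<in>\<Sigma>. \<not> D \<subseteq> S"
  shows "\<exists>C\<subseteq>D. primitive_collection \<Sigma> C"
proof -
  let ?A = "{C. \<forall>S\<in>\<Sigma>. \<not> C \<subseteq> S}"
  obtain C where "C \<in> ?A" "C \<subseteq> D" and minimal: "\<forall>C'\<in>?A. C' \<subseteq> C \<longrightarrow> C = C'"
    using finite_has_minimal2[OF finite, of D ?A] assms by blast
  have "\<exists>S\<in>\<Sigma>. C' \<subseteq> S" if "C' \<subset> C" for C'
  proof (rule ccontr)
    assume "\<not> (\<exists>S\<in>\<Sigma>. C' \<subseteq> S)"
    then have "C' \<in> ?A"
      by simp
    with minimal that show False
      by blast
  qed
  with \<open>C \<in> ?A\<close> have "primitive_collection \<Sigma> C"
    unfolding primitive_collection_def by blast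
  then show ?thesis
    using \<open>C \<subseteq> D\<close> by blast
qed

lemma ex_primitive_collection_mem:
  fixes u :: "'r::finite \<Rightarrow> real^'n"
  assumes "complete_fan u \<Sigma>"
  shows "\<exists>C. primitive_collection \<Sigma> C \<and> \<rho> \<in> C"
proof -
  have pointed: "\<forall>S\<in>\<Sigma>. tcone u S \<inter> uminus ` tcone u S = {0}" and "u \<rho> \<noteq> 0"
    using assms unfolding complete_fan_def primitive_lattice_vector_def by auto
  obtain S where S: "S \<in> \<Sigma>" "- u \<rho> \<in> tcone u S"
    using assms unfolding complete_fan_def by blast
  have "\<not> insert \<rho> S \<subseteq> T" if "T \<in> \<Sigma>" for T
  proof
    assume "insert \<rho> S \<subseteq> T"
    then have "u \<rho> \<in> tcone u T"
      unfolding tcone_def by (intro hull_inc) auto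
    moreover have "- u \<rho> \<in> tcone u T"
      using S(2) tcone_mono[of S T u] \<open>insert \<rho> S \<subseteq> T\<close> by blast
    ultimately have "u \<rho> \<in> tcone u T \<inter> uminus ` tcone u T"
      by (metis IntI image_eqI minus_minus)
    then show False
      using pointed that \<open>u \<rho> \<noteq> 0\<close> by auto
  qed
  then obtain C where "C \<subseteq> insert \<rho> S" "primitive_collection \<Sigma> C"
    using ex_primitive_collection_subset by blast
  moreover have "\<not> C \<subseteq> S"
    using \<open>primitive_collection \<Sigma> C\<close> S(1) unfolding primitive_collection_def by blast
  ultimately show ?thesis
    by blast
qed

lemma Inter_Vcoord_primitive_collections:
  fixes u :: "'r::finite \<Rightarrow> real^'n"
  assumes "complete_fan u \<Sigma>"
  shows "(\<Inter>C\<in>{C. primitive_collection \<Sigma> C}. Vcoord C) = {0}"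
proof -
  have "y = 0" if "y \<in> (\<Inter>C\<in>{C. primitive_collection \<Sigma> C}. Vcoord C)" for y
  proof -
    have "y $ \<rho> = 0" for \<rho>
      using ex_primitive_collection_mem[OF assms, of \<rho>] that unfolding Vcoord_def by blast
    then show ?thesis
      by (simp add: vec_eq_iff)
  qed
  then show ?thesis
    unfolding Vcoord_def by auto
qed

section \<open>The support function of an \<open>\<real>\<close>-ample divisor\<close>

lemma R_ample_support_function:
  fixes u :: "'r::finite \<Rightarrow> real^'n"
  assumes "R_ample u \<Sigma> a" "max_cone \<Sigma> S"
  obtains m :: "real^'n" where "\<And>\<rho>. \<rho> \<in> S \<Longrightarrow> a \<rho> + m \<bullet> u \<rho> = 0"
    "\<And>\<rho>. \<rho> \<notin> S \<Longrightarrow> 0 < a \<rho> + m \<bullet> u \<rho>"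
    "\<And>v. v \<in> GammaR u \<Longrightarrow> chi_pair a v = (\<Sum>\<rho>\<in>UNIV. (a \<rho> + m \<bullet> u \<rho>) * v $ \<rho>)"
proof -
  obtain m where m: "\<forall>\<rho>\<in>S. m \<bullet> u \<rho> = - a \<rho>" "\<forall>\<rho>. \<rho> \<notin> S \<longrightarrow> m \<bullet> u \<rho> > - a \<rho>"
    using assms unfolding R_ample_def by blast
  have "chi_pair a v = (\<Sum>\<rho>\<in>UNIV. (a \<rho> + m \<bullet> u \<rho>) * v $ \<rho>)" if "v \<in> GammaR u" for v
  proof -
    have "(\<Sum>\<rho>\<in>UNIV. (m \<bullet> u \<rho>) * v $ \<rho>) = m \<bullet> (\<Sum>\<rho>\<in>UNIV. v $ \<rho> *\<^sub>R u \<rho>)"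
      by (simp add: inner_sum_right mult.commute)
    also have "\<dots> = 0"
      using that by (simp add: GammaR_def)
    finally show ?thesis
      by (simp add: chi_pair_def distrib_right sum.distrib)
  qed
  with m show ?thesis
    using that by force
qed

lemma chi_pair_nonneg_off_max_cone:
  fixes u :: "'r::finite \<Rightarrow> real^'n"
  assumes "R_ample u \<Sigma> a" "max_cone \<Sigma> S" "v \<in> GammaR u" "\<And>\<rho>. \<rho> \<notin> S \<Longrightarrow> 0 \<le> v $ \<rho>"
  shows "0 \<le> chi_pair a v"
proof -
  obtain m where m: "\<And>\<rho>. \<rho> \<in> S \<Longrightarrow> a \<rho> + m \<bullet> u \<rho> = 0" "\<And>\<rho>. \<rho> \<notin> S \<Longrightarrow> 0 < a \<rho> + m \<bullet> u \<rho>"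
    and chi: "chi_pair a v = (\<Sum>\<rho>\<in>UNIV. (a \<rho> + m \<bullet> u \<rho>) * v $ \<rho>)"
    using R_ample_support_function[OF assms(1,2)] assms(3) by metis
  have "0 \<le> (a \<rho> + m \<bullet> u \<rho>) * v $ \<rho>" for \<rho>
    using m assms(4) by (cases "\<rho> \<in> S") (auto intro: mult_nonneg_nonneg less_imp_le)
  then show ?thesis
    unfolding chi by (rule sum_nonneg)
qed

lemma chi_pair_neg_off_max_cone:
  fixes u :: "'r::finite \<Rightarrow> real^'n"
  assumes "R_ample u \<Sigma> a" "max_cone \<Sigma> S" "v \<in> GammaR u" "\<And>\<rho>. \<rho> \<notin> S \<Longrightarrow> v $ \<rho> \<le> 0"
    and "\<tau> \<notin> S" "v $ \<tau> < 0"
  shows "chi_pair a v < 0"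
proof -
  obtain m where m: "\<And>\<rho>. \<rho> \<in> S \<Longrightarrow> a \<rho> + m \<bullet> u \<rho> = 0" "\<And>\<rho>. \<rho> \<notin> S \<Longrightarrow> 0 < a \<rho> + m \<bullet> u \<rho>"
    and chi: "chi_pair a v = (\<Sum>\<rho>\<in>UNIV. (a \<rho> + m \<bullet> u \<rho>) * v $ \<rho>)"
    using R_ample_support_function[OF assms(1,2)] assms(3) by metis
  have "(a \<rho> + m \<bullet> u \<rho>) * v $ \<rho> \<le> 0" for \<rho>
    using m assms(4) by (cases "\<rho> \<in> S") (auto intro: mult_nonneg_nonpos less_imp_le)
  moreover have "(a \<tau> + m \<bullet> u \<tau>) * v $ \<tau> < 0"
    using m(2)[OF assms(5)] assms(6) by (simp add: mult_pos_neg)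
  ultimately have "(\<Sum>\<rho>\<in>UNIV. (a \<rho> + m \<bullet> u \<rho>) * v $ \<rho>) < (\<Sum>\<rho>\<in>(UNIV::'r set). 0)"
    by (intro sum_strict_mono_ex1) auto
  then show ?thesis
    unfolding chi by simp
qed

text \<open>The witness is \<open>w = c - 1_C\<close> from the primitive relation \<open>\<Sum>\<rho>\<in>C. u \<rho> = \<Sum>\<tau>. c \<tau> u \<tau>\<close>
  with \<open>c\<close> supported on a cone; as \<open>C\<close> lies in no cone, some \<open>\<rho> \<in> C\<close> lies outside any maximal cone
  containing that one.\<close>
lemma primitive_relation_chi_pair_neg:
  fixes u :: "'r::finite \<Rightarrow> real^'n"
  assumes "complete_fan u \<Sigma>" "R_ample u \<Sigma> a" "primitive_collection \<Sigma> C"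
  obtains w where "w \<in> GammaR u" "\<And>\<tau>. \<tau> \<notin> C \<Longrightarrow> 0 \<le> w $ \<tau>" "chi_pair a w < 0"
proof -
  obtain S where S: "S \<in> \<Sigma>" "(\<Sum>\<tau>\<in>C. u \<tau>) \<in> tcone u S"
    using assms(1) unfolding complete_fan_def by blast
  obtain c where c: "\<forall>\<tau>. 0 \<le> c \<tau>" "\<forall>\<tau>. \<tau> \<notin> S \<longrightarrow> c \<tau> = 0"
    "(\<Sum>\<tau>\<in>C. u \<tau>) = (\<Sum>\<tau>\<in>UNIV. c \<tau> *\<^sub>R u \<tau>)"
    using tcone_imp_nonneg_combination[OF S(2)] by blast
  define w :: "real^'r" where "w = (\<chi> \<tau>. c \<tau> - (if \<tau> \<in> C then 1 else 0))"
  have "(\<Sum>\<tau>\<in>UNIV. w $ \<tau> *\<^sub>R u \<tau>) = (\<Sum>\<tau>\<in>UNIV. c \<tau> *\<^sub>R u \<tau>) - (\<Sum>\<tau>\<in>UNIV. if \<tau> \<in> C then u \<tau> else 0)"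
    unfolding w_def by (simp add: scaleR_diff_left sum_subtractf if_distrib[of "\<lambda>c. c *\<^sub>R _"] cong: if_cong)
  also have "\<dots> = 0"
    using c(3) by (simp add: sum.If_cases)
  finally have "w \<in> GammaR u"
    unfolding GammaR_def by simp
  obtain S' where S': "max_cone \<Sigma> S'" "S \<subseteq> S'"
    using ex_max_cone_superset[OF S(1)] by blast
  then obtain \<tau> where "\<tau> \<in> C" "\<tau> \<notin> S'"
    using assms(3) unfolding primitive_collection_def max_cone_def by blast
  have "c \<rho> = 0" if "\<rho> \<notin> S'" for \<rho>
    using c(2) S'(2) that by blast
  then have "chi_pair a w < 0"
    using \<open>\<tau> \<in> C\<close> \<open>\<tau> \<notin> S'\<close>
    by (intro chi_pair_neg_off_max_cone[OF assms(2) S'(1) \<open>w \<in> GammaR u\<close>, of \<tau>]) (auto simp: w_def)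
  moreover have "0 \<le> w $ \<tau>" if "\<tau> \<notin> C" for \<tau>
    using c(1) that by (simp add: w_def)
  ultimately show ?thesis
    using that \<open>w \<in> GammaR u\<close> by blast
qed

section \<open>The strata \<open>S_\<lambda>\<close>\<close>

lemma lambda_x_eq_The_optimal_vector:
  "lambda_x u a x = (THE v. optimal_vector (chi_pair a) (sigma_x u x) v)"
  unfolding lambda_x_def optimal_vector_def by (rule refl)

lemma lambda_x_optimal:
  fixes u :: "'r::finite \<Rightarrow> real^'n"
  assumes "complete_fan u \<Sigma>" "R_ample u \<Sigma> a" "x \<in> Zset \<Sigma>"
  shows "optimal_vector (chi_pair a) (sigma_x u x) (lambda_x u a x)"
proof -
  obtain C where C: "primitive_collection \<Sigma> C" "x \<in> Vcoord C"
    using assms(3) unfolding Zset_def by blast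
  obtain w where w: "w \<in> GammaR u" "\<And>\<tau>. \<tau> \<notin> C \<Longrightarrow> 0 \<le> w $ \<tau>" "chi_pair a w < 0"
    using primitive_relation_chi_pair_neg[OF assms(1,2) C(1)] by blast
  then have "w \<in> sigma_x u x"
    using C(2) unfolding sigma_x_def Vcoord_def by auto
  have "\<exists>!v. optimal_vector (chi_pair a) (sigma_x u x) v"
    using linear_chi_pair closed_sigma_x convex_cone_sigma_x \<open>w \<in> sigma_x u x\<close> w(3)
    by (rule ex1_optimal_vector)
  then show ?thesis
    unfolding lambda_x_eq_The_optimal_vector by (rule theI')
qed

lemma lambda_x_eq_if_same_zeros:
  assumes "\<And>\<tau>. x $ \<tau> = 0 \<longleftrightarrow> y $ \<tau> = 0"
  shows "lambda_x u a x = lambda_x u a y"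
proof -
  have "sigma_x u x = sigma_x u y"
    using assms unfolding sigma_x_def by auto
  then show ?thesis
    unfolding lambda_x_def by simp
qed

lemma Vcoord_subset_Zset: "primitive_collection \<Sigma> C \<Longrightarrow> Vcoord C \<subseteq> Zset \<Sigma>"
  unfolding Zset_def by blast

lemma closed_Vcoord: "closed (Vcoord C)"
proof -
  have "Vcoord C = (\<Inter>\<tau>\<in>C. {x. x $ \<tau> = 0})"
    unfolding Vcoord_def by auto
  moreover have "closed {x::complex^'r. x $ \<tau> = 0}" for \<tau>
    by (intro closed_Collect_eq continuous_intros)
  ultimately show ?thesis
    by (simp only:) (intro closed_INT ballI)
qed

lemma mem_stratum_if_same_zeros:
  assumes "x \<in> Zset \<Sigma>" "\<And>\<tau>. z $ \<tau> = 0 \<longleftrightarrow> x $ \<tau> = 0"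
  shows "z \<in> stratum u \<Sigma> a (lambda_x u a x)"
proof -
  have "z \<in> Zset \<Sigma>"
    using assms unfolding Zset_def Vcoord_def by auto
  then show ?thesis
    unfolding stratum_def using lambda_x_eq_if_same_zeros[OF assms(2)] by simp
qed

lemma stratum_coord_eq_0:
  fixes u :: "'r::finite \<Rightarrow> real^'n"
  assumes "complete_fan u \<Sigma>" "R_ample u \<Sigma> a" "x \<in> stratum u \<Sigma> a l" "l $ \<tau> < 0"
  shows "x $ \<tau> = 0"
proof -
  have "x \<in> Zset \<Sigma>" "lambda_x u a x = l"
    using assms(3) unfolding stratum_def by auto
  then have "optimal_vector (chi_pair a) (sigma_x u x) l"
    using lambda_x_optimal[OF assms(1,2)] by metis
  then have "l \<in> sigma_x u x"
    by (simp add: optimal_vector_def)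
  then show ?thesis
    using assms(4) unfolding sigma_x_def by force
qed

definition generic_point :: "'r::finite set \<Rightarrow> complex^'r" where
  "generic_point C = (\<chi> \<tau>. if \<tau> \<in> C then 0 else 1)"

lemma generic_point_eq_0_iff [simp]: "generic_point C $ \<tau> = 0 \<longleftrightarrow> \<tau> \<in> C"
  by (simp add: generic_point_def)

lemma generic_point_in_Vcoord: "generic_point C \<in> Vcoord C"
  by (simp add: Vcoord_def)

lemma generic_point_in_Zset: "primitive_collection \<Sigma> C \<Longrightarrow> generic_point C \<in> Zset \<Sigma>"
  using generic_point_in_Vcoord Vcoord_subset_Zset by blast

lemma lambda_generic_point_neg:
  fixes u :: "'r::finite \<Rightarrow> real^'n"
  assumes "complete_fan u \<Sigma>" "R_ample u \<Sigma> a" "primitive_collection \<Sigma> C" "\<rho> \<in> C"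
  shows "lambda_x u a (generic_point C) $ \<rho> < 0"
proof (rule ccontr)
  let ?l = "lambda_x u a (generic_point C)"
  assume "\<not> ?l $ \<rho> < 0"
  have opt: "optimal_vector (chi_pair a) (sigma_x u (generic_point C)) ?l"
    using lambda_x_optimal[OF assms(1,2) generic_point_in_Zset[OF assms(3)]] .
  then have "?l \<in> sigma_x u (generic_point C)"
    by (simp add: optimal_vector_def)
  then have "?l \<in> GammaR u" and nonneg_off_C: "\<And>\<tau>. \<tau> \<notin> C \<Longrightarrow> 0 \<le> ?l $ \<tau>"
    unfolding sigma_x_def by auto
  have "C - {\<rho>} \<subset> C"
    using assms(4) by blast
  then obtain S where "S \<in> \<Sigma>" "C - {\<rho>} \<subseteq> S"
    using assms(3) unfolding primitive_collection_def by blast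
  obtain S' where S': "max_cone \<Sigma> S'" "S \<subseteq> S'"
    using ex_max_cone_superset[OF \<open>S \<in> \<Sigma>\<close>] by blast
  have "0 \<le> ?l $ \<tau>" if "\<tau> \<notin> S'" for \<tau>
  proof (cases "\<tau> = \<rho>")
    case True
    then show ?thesis
      using \<open>\<not> ?l $ \<rho> < 0\<close> by simp
  next
    case False
    then have "\<tau> \<notin> C"
      using that S'(2) \<open>C - {\<rho>} \<subseteq> S\<close> by blast
    then show ?thesis
      by (rule nonneg_off_C)
  qed
  then have "0 \<le> chi_pair a ?l"
    by (rule chi_pair_nonneg_off_max_cone[OF assms(2) S'(1) \<open>?l \<in> GammaR u\<close>])
  with optimal_vector_neg[OF opt] show False
    by simp
qed

lemma in_closure_if_open_ray_subset:
  fixes y d :: "'a::real_normed_vector"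
  assumes "\<And>t. 0 < t \<Longrightarrow> y + t *\<^sub>R d \<in> A"
  shows "y \<in> closure A"
proof -
  have "(\<lambda>n. y + inverse (real (Suc n)) *\<^sub>R d) \<longlonglongrightarrow> y + 0 *\<^sub>R d"
    by (intro tendsto_intros LIMSEQ_inverse_real_of_nat)
  then show ?thesis
    unfolding closure_sequential using assms by (intro exI[of _ "\<lambda>n. y + inverse (real (Suc n)) *\<^sub>R d"]) simp
qed

lemma closure_stratum_generic_point:
  fixes u :: "'r::finite \<Rightarrow> real^'n"
  assumes "complete_fan u \<Sigma>" "R_ample u \<Sigma> a" "primitive_collection \<Sigma> C"
  shows "closure (stratum u \<Sigma> a (lambda_x u a (generic_point C))) = Vcoord C"
proof
  have "stratum u \<Sigma> a (lambda_x u a (generic_point C)) \<subseteq> Vcoord C"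
    using stratum_coord_eq_0[OF assms(1,2)] lambda_generic_point_neg[OF assms] unfolding Vcoord_def by blast
  then show "closure (stratum u \<Sigma> a (lambda_x u a (generic_point C))) \<subseteq> Vcoord C"
    using closed_Vcoord by (rule closure_minimal)
next
  show "Vcoord C \<subseteq> closure (stratum u \<Sigma> a (lambda_x u a (generic_point C)))"
  proof
    fix y assume "y \<in> Vcoord C"
    define d :: "complex^'r" where "d = (\<chi> \<tau>. if \<tau> \<notin> C \<and> y $ \<tau> = 0 then 1 else 0)"
    have "y + t *\<^sub>R d \<in> stratum u \<Sigma> a (lambda_x u a (generic_point C))" if "0 < t" for t
      using \<open>y \<in> Vcoord C\<close> that
      by (intro mem_stratum_if_same_zeros generic_point_in_Zset[OF assms(3)]) (auto simp: d_def Vcoord_def)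
    then show "y \<in> closure (stratum u \<Sigma> a (lambda_x u a (generic_point C)))"
      by (rule in_closure_if_open_ray_subset)
  qed
qed

lemma lambda_C_eq_lambda_generic_point:
  fixes u :: "'r::finite \<Rightarrow> real^'n"
  assumes "complete_fan u \<Sigma>" "R_ample u \<Sigma> a" "primitive_collection \<Sigma> C"
  shows "lambda_C u \<Sigma> a C = lambda_x u a (generic_point C)"
  unfolding lambda_C_def
proof (rule the_equality)
  show "lambda_x u a (generic_point C) \<in> LambdaD u \<Sigma> a \<and>
      closure (stratum u \<Sigma> a (lambda_x u a (generic_point C))) = Vcoord C"
    using closure_stratum_generic_point[OF assms] generic_point_in_Zset[OF assms(3)]
    unfolding LambdaD_def by blast
next
  fix l assume l: "l \<in> LambdaD u \<Sigma> a \<and> closure (stratum u \<Sigma> a l) = Vcoord C"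
  define U where "U = (\<Inter>\<tau>\<in>- C. {z::complex^'r. z $ \<tau> \<noteq> 0})"
  have "open U"
    unfolding U_def by (intro open_INT finite ballI open_Collect_neq continuous_intros)
  moreover have "generic_point C \<in> U \<inter> closure (stratum u \<Sigma> a l)"
    using l generic_point_in_Vcoord by (auto simp: U_def)
  ultimately obtain z where z: "z \<in> U" "z \<in> stratum u \<Sigma> a l"
    using open_Int_closure_eq_empty by blast
  then have "z \<in> Vcoord C"
    using l closure_subset by blast
  with z have "\<And>\<tau>. z $ \<tau> = 0 \<longleftrightarrow> generic_point C $ \<tau> = 0"
    unfolding U_def Vcoord_def by auto
  then have "lambda_x u a z = lambda_x u a (generic_point C)"
    by (rule lambda_x_eq_if_same_zeros)
  with z(2) show "l = lambda_x u a (generic_point C)"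
    unfolding stratum_def by simp
qed

lemma zero_in_closure_stratum:
  assumes "l \<in> LambdaD u \<Sigma> a"
  shows "0 \<in> closure (stratum u \<Sigma> a l)"
proof -
  obtain x where "x \<in> Zset \<Sigma>" "l = lambda_x u a x"
    using assms unfolding LambdaD_def by blast
  then have "0 + t *\<^sub>R x \<in> stratum u \<Sigma> a l" if "0 < t" for t
    using that mem_stratum_if_same_zeros[of x \<Sigma> "t *\<^sub>R x"] by simp
  then show ?thesis
    by (rule in_closure_if_open_ray_subset)
qed

theorem corollary5p33:
  fixes u :: "'r::finite \<Rightarrow> real^'n" and \<Sigma> :: "'r set set" and a :: "'r \<Rightarrow> real"
  assumes "complete_fan u \<Sigma>" and "projective_fan u \<Sigma>" and "R_ample u \<Sigma> a"
  shows "{0} = (\<Inter>l\<in>LambdaD u \<Sigma> a. closure (stratum u \<Sigma> a l))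
       \<and> (\<Inter>l\<in>LambdaD u \<Sigma> a. closure (stratum u \<Sigma> a l))
         = (\<Inter>C\<in>{C. primitive_collection \<Sigma> C}. closure (stratum u \<Sigma> a (lambda_C u \<Sigma> a C)))"
proof -
  let ?I = "\<Inter>l\<in>LambdaD u \<Sigma> a. closure (stratum u \<Sigma> a l)"
  let ?J = "\<Inter>C\<in>{C. primitive_collection \<Sigma> C}. closure (stratum u \<Sigma> a (lambda_C u \<Sigma> a C))"
  have lambda_C: "lambda_C u \<Sigma> a C \<in> LambdaD u \<Sigma> a"
      "closure (stratum u \<Sigma> a (lambda_C u \<Sigma> a C)) = Vcoord C"
    if "primitive_collection \<Sigma> C" for C
    using lambda_C_eq_lambda_generic_point[OF assms(1,3) that] closure_stratum_generic_point[OF assms(1,3) that]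
      generic_point_in_Zset[OF that] unfolding LambdaD_def by auto
  have "?J = {0}"
    using Inter_Vcoord_primitive_collections[OF assms(1)] lambda_C(2) by simp
  moreover have "{0} \<subseteq> ?I"
    using zero_in_closure_stratum by blast
  moreover have "?I \<subseteq> ?J"
    using lambda_C(1) by blast
  ultimately show ?thesis
    by blast
qed

end
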